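(* Let $X=\{X(t),\ t\ge 0\}$ be a stochastic process and suppose that for every $q\in\mathbb{R}$ the limit $$\tau(q)=\lim_{t\to\infty}\frac{\log \mathbb{E}|X(t)|^q}{\log t}$$ exists in $(-\infty,+\infty]$ (with $\tau(q)=+\infty$ if $\mathbb{E}|X(t)|^q=\infty$ for all large $t$). Let $\mathcal{D}_\tau=\{q\in\mathbb{R}:\tau(q)<\infty\}$. Then: (i) $\tau$ is convex. (ii) $q\mapsto \tau(q)/q$ is nondecreasing on $\mathcal{D}_\tau\setminus\{0\}$. (iii) If $\tau(q')\ge 0$ for some $q'>0$, then $\tau(q)\ge 0$ for every $q\ge q'$ and $\tau$ is nondecreasing on $\mathcal{D}_\tau\cap[q',\infty)$. In particular, if $\tau(q)\ge 0$ for every $q>0$, then $\tau$ is nondecreasing on $\mathcal{D}_\tau\cap[0,\infty)$. (iv) For every $q<0$, $$\tau(q)\ \ge\ q\,\inf_{q'>0}\frac{\tau(q')}{q'}.$$ In particular, $\tau(q)\ge -\tau(-q)$ for every $q<0$.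
   Context: $\tau$ is called the scaling function of $X$; note $\tau(0)=0$. Absolute moments of negative order $\mathbb{E}|X(t)|^q$, $q<0$, are allowed and may be infinite. *)

theory Defs
  imports "HOL-Probability.Probability"
begin

definition abs_pow_enn :: "real \<Rightarrow> real \<Rightarrow> ennreal" where
  "abs_pow_enn q x =
     (if x = 0 then (if q < 0 then \<infinity> else if q = 0 then 1 else 0)
      else ennreal (\<bar>x\<bar> powr q))"

definition abs_moment :: "'a measure \<Rightarrow> ('a \<Rightarrow> real) \<Rightarrow> real \<Rightarrow> ennreal" where
  "abs_moment M Y q = (\<integral>\<^sup>+ \<omega>. abs_pow_enn q (Y \<omega>) \<partial>M)"

definition log_moment_ratio :: "'a measure \<Rightarrow> ('a \<Rightarrow> real) \<Rightarrow> real \<Rightarrow> real \<Rightarrow> ereal" where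
  "log_moment_ratio M Y q t =
     (let m = abs_moment M Y q in
      if m = \<infinity> then \<infinity>
      else if m = 0 then -\<infinity>
      else ereal (ln (enn2real m) / ln t))"

end

theory Submission
  imports Defs
begin

text \<open>By Hoelder's inequality, q \<mapsto> log E|X(t)|^q is convex for every t, and dividing by
  log t > 0 and letting t \<rightarrow> \<infinity> preserves convexity, so \<tau> is convex with \<tau>(0) = 0.
  Everything else is a property of such convex functions: the three-chord inequality with the
  origin as one of the three points makes \<tau>(q)/q nondecreasing, which yields (iii) and (iv).\<close>

locale scaling_function =
  fixes \<tau> :: "real \<Rightarrow> ereal"
  assumes convex: "\<And>x y l. 0 < l \<Longrightarrow> l < 1 \<Longrightarrow>
      \<tau> ((1 - l) * x + l * y) \<le> ereal (1 - l) * \<tau> x + ereal l * \<tau> y"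
    and zero [simp]: "\<tau> 0 = 0"
    and not_MInfty [simp]: "\<tau> q \<noteq> -\<infinity>"
begin

lemma convex_finite:
  assumes l: "0 < l" "l < 1" and fin: "\<tau> x < \<infinity>" "\<tau> y < \<infinity>"
  shows "\<tau> ((1 - l) * x + l * y) < \<infinity>"
    and "real_of_ereal (\<tau> ((1 - l) * x + l * y))
           \<le> (1 - l) * real_of_ereal (\<tau> x) + l * real_of_ereal (\<tau> y)"
proof -
  obtain a b where "\<tau> x = ereal a" "\<tau> y = ereal b"
    using fin by (cases "\<tau> x"; cases "\<tau> y") auto
  then have "\<tau> ((1 - l) * x + l * y)
          \<le> ereal ((1 - l) * real_of_ereal (\<tau> x) + l * real_of_ereal (\<tau> y))"
    using convex[OF l, of x y] by simp
  then show "\<tau> ((1 - l) * x + l * y) < \<infinity>"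
    and "real_of_ereal (\<tau> ((1 - l) * x + l * y))
           \<le> (1 - l) * real_of_ereal (\<tau> x) + l * real_of_ereal (\<tau> y)"
    using not_MInfty[of "(1 - l) * x + l * y"]
    by (cases "\<tau> ((1 - l) * x + l * y)"; simp)+
qed

lemma convex_finite_dom: "convex {q. \<tau> q < \<infinity>}"
proof (rule convexI)
  fix x y u v :: real
  assume "x \<in> {q. \<tau> q < \<infinity>}" "y \<in> {q. \<tau> q < \<infinity>}" "0 \<le> u" "0 \<le> v" "u + v = 1"
  moreover have "u = 1 - v"
    using \<open>u + v = 1\<close> by simp
  ultimately show "u *\<^sub>R x + v *\<^sub>R y \<in> {q. \<tau> q < \<infinity>}"
    using convex_finite(1)[of v x y] by (cases "u = 0 \<or> v = 0") auto
qed

lemma convex_on_finite_dom: "convex_on {q. \<tau> q < \<infinity>} (\<lambda>q. real_of_ereal (\<tau> q))"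
  using convex_finite(2) convex_finite_dom by (intro convex_onI) auto

lemma finite_dom_between_zero:
  assumes "0 \<le> p" "p \<le> q" "\<tau> q < \<infinity>"
  shows "\<tau> p < \<infinity>"
proof (cases "q = 0")
  case False
  have "(1 - p / q) *\<^sub>R 0 + (p / q) *\<^sub>R q \<in> {q. \<tau> q < \<infinity>}"
    using assms False
    by (intro convexD[OF convex_finite_dom]) (auto simp: field_simps)
  then show ?thesis
    using False by simp
qed (use assms in simp)

lemma ratio_mono:
  assumes "p \<in> {q. \<tau> q < \<infinity>} - {0}" "q \<in> {q. \<tau> q < \<infinity>} - {0}" "p \<le> q"
  shows "real_of_ereal (\<tau> p) / p \<le> real_of_ereal (\<tau> q) / q"
proof -
  have zero_dom: "0 \<in> {q. \<tau> q < \<infinity>}" by simp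
  note slope = convex_on_slope_le[OF convex_on_finite_dom]
  consider "0 < p" "p < q" | "p < 0" "0 < q" | "p < q" "q < 0" | "p = q"
    using assms by force
  then show ?thesis
  proof cases
    case 1
    then show ?thesis using slope(1)[OF zero_dom, of q p] assms by simp
  next
    case 2
    then show ?thesis using slope[of p q 0] assms by simp
  next
    case 3
    then show ?thesis using slope(2)[OF _ zero_dom, of p q] assms by simp
  qed simp
qed

lemma nonneg_above:
  assumes "0 < q'" "\<tau> q' \<ge> 0" "q' \<le> q"
  shows "\<tau> q \<ge> 0"
proof (cases "\<tau> q")
  case (real b)
  then obtain a where a: "\<tau> q' = ereal a"
    using finite_dom_between_zero[of q' q] assms by (cases "\<tau> q'") auto
  then have "0 \<le> a / q'"
    using assms by simp
  also have "\<dots> \<le> b / q"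
    using ratio_mono[of q' q] real a assms by simp
  finally show ?thesis
    using real assms by (simp add: zero_le_divide_iff)
qed simp_all

lemma mono_above:
  assumes "0 < q'" "\<tau> q' \<ge> 0" "\<tau> p < \<infinity>" "\<tau> q < \<infinity>" "q' \<le> p" "p \<le> q"
  shows "\<tau> p \<le> \<tau> q"
proof -
  obtain a b where ab: "\<tau> p = ereal a" "\<tau> q = ereal b"
    using assms(3,4) by (cases "\<tau> p"; cases "\<tau> q") auto
  have "0 \<le> b"
    using nonneg_above[of q' q] ab assms by simp
  have "a \<le> p * (b / q)"
    using ratio_mono[of p q] ab assms by (simp add: field_simps)
  also have "\<dots> \<le> q * (b / q)"
    using assms \<open>0 \<le> b\<close> by (intro mult_right_mono) auto
  also have "\<dots> = b"
    using assms by simp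
  finally show ?thesis
    using ab by simp
qed

lemma mono_nonneg:
  assumes "\<And>q. 0 < q \<Longrightarrow> \<tau> q \<ge> 0" "\<tau> p < \<infinity>" "\<tau> q < \<infinity>" "0 \<le> p" "p \<le> q"
  shows "\<tau> p \<le> \<tau> q"
proof (cases "p = 0")
  case True
  then show ?thesis
    using assms(1)[of q] assms(5) by (cases "q = 0") auto
qed (use assms mono_above[of p p q] in auto)

lemma ge_mult_INF_ratio:
  assumes "q < 0"
  shows "\<tau> q \<ge> ereal q * (INF q'\<in>{0<..}. \<tau> q' / ereal q')"
proof (cases "\<tau> q")
  case (real a)
  have "ereal (a / q) \<le> \<tau> q' / ereal q'" if "0 < q'" for q'
  proof (cases "\<tau> q'")
    case (real b)
    then have "a / q \<le> b / q'"
      using ratio_mono[of q q'] \<open>\<tau> q = ereal a\<close> assms that by simp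
    then show ?thesis
      using real that by simp
  qed (use that in simp_all)
  then have le: "ereal (a / q) \<le> (INF q'\<in>{0<..}. \<tau> q' / ereal q')"
    by (intro INF_greatest) simp
  show ?thesis
  proof (cases "INF q'\<in>{0<..}. \<tau> q' / ereal q'")
    case (real w)
    then have "q * w \<le> q * (a / q)"
      using le assms by (intro mult_left_mono_neg) auto
    then show ?thesis
      using real \<open>\<tau> q = ereal a\<close> assms by simp
  qed (use le assms in auto)
qed simp_all

lemma uminus_at_uminus_le: "\<tau> q \<ge> - \<tau> (- q)"
proof -
  have "0 \<le> ereal (1/2) * \<tau> q + ereal (1/2) * \<tau> (- q)"
    using convex[of "1/2" q "- q"] by simp
  then show ?thesis
    using not_MInfty[of q] not_MInfty[of "- q"] by (cases "\<tau> q"; cases "\<tau> (- q)") auto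
qed

end

lemma abs_pow_enn_measurable [measurable]:
  assumes [measurable]: "Y \<in> borel_measurable M"
  shows "(\<lambda>\<omega>. abs_pow_enn q (Y \<omega>)) \<in> borel_measurable M"
  unfolding abs_pow_enn_def by measurable

lemma abs_pow_enn_convex_combination:
  assumes "abs_pow_enn x z = ennreal u" "abs_pow_enn y z = ennreal v" "0 \<le> u" "0 \<le> v"
    and "0 < l" "l < 1"
  shows "abs_pow_enn ((1 - l) * x + l * y) z = ennreal (u powr (1 - l) * v powr l)"
proof (cases "z = 0")
  case False
  then have "\<bar>z\<bar> powr ((1 - l) * x + l * y) = (\<bar>z\<bar> powr x) powr (1 - l) * (\<bar>z\<bar> powr y) powr l"
    by (simp add: powr_powr powr_add mult.commute)
  with assms False show ?thesis
    by (simp add: abs_pow_enn_def)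
next
  case True
  then have "0 \<le> x" "0 \<le> y" "u = (if x = 0 then 1 else 0)" "v = (if y = 0 then 1 else 0)"
    using assms by (auto simp: abs_pow_enn_def split: if_splits)
  moreover have "0 < (1 - l) * x + l * y \<longleftrightarrow> x \<noteq> 0 \<or> y \<noteq> 0"
    using \<open>0 \<le> x\<close> \<open>0 \<le> y\<close> assms(5,6)
    by (smt (verit) mult_pos_pos mult_eq_0_iff)
  ultimately show ?thesis
    using True assms(5,6) by (auto simp: abs_pow_enn_def)
qed

lemma Youngs_inequality_scaled:
  fixes u v a b l :: real
  assumes "0 \<le> u" "0 \<le> v" "0 < a" "0 < b" "0 < l" "l < 1"
  shows "u powr (1 - l) * v powr l \<le> a powr (1 - l) * b powr l * ((1 - l) * (u / a) + l * (v / b))"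
proof (cases "u = 0 \<or> v = 0")
  case True
  with assms show ?thesis
    by auto
next
  case False
  then have "(u / a) powr (1 - l) * (v / b) powr l \<le> (1 - l) * (u / a) + l * (v / b)"
    using assms by (intro Youngs_inequality_0) auto
  moreover have "(u / a) powr (1 - l) * (v / b) powr l
      = (u powr (1 - l) * v powr l) / (a powr (1 - l) * b powr l)"
    using assms by (simp add: powr_divide)
  ultimately show ?thesis
    using assms by (simp add: divide_le_eq mult.commute)
qed

text \<open>Hoelder's inequality, proved by integrating Young's inequality after normalising both
  moments to 1.\<close>
lemma abs_moment_convex_combination_le:
  assumes [measurable]: "Y \<in> borel_measurable M" and l: "0 < l" "l < 1"
    and x: "abs_moment M Y x = ennreal a" "0 < a"
    and y: "abs_moment M Y y = ennreal b" "0 < b"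
  shows "abs_moment M Y ((1 - l) * x + l * y) \<le> ennreal (a powr (1 - l) * b powr l)"
proof -
  define C where "C = a powr (1 - l) * b powr l"
  have "C > 0"
    using x y by (simp add: C_def)
  have "AE \<omega> in M. abs_pow_enn x (Y \<omega>) \<noteq> \<infinity>" "AE \<omega> in M. abs_pow_enn y (Y \<omega>) \<noteq> \<infinity>"
    using x y unfolding abs_moment_def by (intro nn_integral_PInf_AE; simp)+
  then have "AE \<omega> in M. abs_pow_enn ((1 - l) * x + l * y) (Y \<omega>)
      \<le> ennreal (C * (1 - l) / a) * abs_pow_enn x (Y \<omega>) + ennreal (C * l / b) * abs_pow_enn y (Y \<omega>)"
  proof eventually_elim
    case (elim \<omega>)
    obtain u where u: "abs_pow_enn x (Y \<omega>) = ennreal u" "0 \<le> u"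
      using elim(1) by (cases "abs_pow_enn x (Y \<omega>)") auto
    obtain v where v: "abs_pow_enn y (Y \<omega>) = ennreal v" "0 \<le> v"
      using elim(2) by (cases "abs_pow_enn y (Y \<omega>)") auto
    have "abs_pow_enn ((1 - l) * x + l * y) (Y \<omega>) = ennreal (u powr (1 - l) * v powr l)"
      using abs_pow_enn_convex_combination[OF u(1) v(1) u(2) v(2) l] .
    also have "\<dots> \<le> ennreal (C * ((1 - l) * (u / a) + l * (v / b)))"
      using Youngs_inequality_scaled[OF u(2) v(2) x(2) y(2) l] by (simp add: C_def ennreal_leI)
    also have "C * ((1 - l) * (u / a) + l * (v / b)) = C * (1 - l) / a * u + C * l / b * v"
      by (simp add: algebra_simps)
    also have "ennreal \<dots> = ennreal (C * (1 - l) / a) * ennreal u + ennreal (C * l / b) * ennreal v"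
      using u(2) v(2) l x(2) y(2) \<open>C > 0\<close> by (simp add: ennreal_mult[symmetric])
    finally show ?case
      using u(1) v(1) by simp
  qed
  then have "abs_moment M Y ((1 - l) * x + l * y) \<le> (\<integral>\<^sup>+\<omega>.
      ennreal (C * (1 - l) / a) * abs_pow_enn x (Y \<omega>) + ennreal (C * l / b) * abs_pow_enn y (Y \<omega>) \<partial>M)"
    unfolding abs_moment_def by (rule nn_integral_mono_AE)
  also have "\<dots> = ennreal (C * (1 - l) / a) * ennreal a + ennreal (C * l / b) * ennreal b"
    by (simp add: nn_integral_add nn_integral_cmult x(1)[symmetric] y(1)[symmetric] abs_moment_def)
  also have "\<dots> = ennreal C"
    using l x(2) y(2) \<open>C > 0\<close>
    by (simp add: ennreal_mult''[symmetric] ennreal_plus[symmetric] field_simps del: ennreal_plus)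
  finally show ?thesis
    unfolding C_def .
qed

lemma log_moment_ratio_convex_combination_le:
  assumes "Y \<in> borel_measurable M" "1 < t" and l: "0 < l" "l < 1"
    and x: "abs_moment M Y x = ennreal a" "0 < a"
    and y: "abs_moment M Y y = ennreal b" "0 < b"
  shows "log_moment_ratio M Y ((1 - l) * x + l * y) t
    \<le> ereal (1 - l) * log_moment_ratio M Y x t + ereal l * log_moment_ratio M Y y t"
proof -
  define m where "m = abs_moment M Y ((1 - l) * x + l * y)"
  have m_le: "m \<le> ennreal (a powr (1 - l) * b powr l)"
    unfolding m_def using abs_moment_convex_combination_le[OF assms(1) l x y] .
  have rhs: "ereal (1 - l) * log_moment_ratio M Y x t + ereal l * log_moment_ratio M Y y t
      = ereal (((1 - l) * ln a + l * ln b) / ln t)"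
    using x y by (simp add: log_moment_ratio_def add_divide_distrib)
  show ?thesis
  proof (cases "m = 0")
    case False
    then obtain c where c: "m = ennreal c" "0 < c"
      using m_le by (cases m) (auto simp: top_unique)
    then have "ln c \<le> ln (a powr (1 - l) * b powr l)"
      using m_le x(2) y(2) by (simp add: ennreal_le_iff2)
    also have "\<dots> = (1 - l) * ln a + l * ln b"
      using x(2) y(2) by (simp add: ln_mult ln_powr)
    finally have "ln c / ln t \<le> ((1 - l) * ln a + l * ln b) / ln t"
      using \<open>1 < t\<close> by (simp add: divide_right_mono)
    then show ?thesis
      using c unfolding rhs by (simp add: log_moment_ratio_def m_def[symmetric])
  qed (simp add: rhs log_moment_ratio_def m_def[symmetric])
qed

lemma abs_moment_order_zero: "prob_space M \<Longrightarrow> abs_moment M Y 0 = 1"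
proof -
  have "abs_pow_enn 0 z = 1" for z
    by (simp add: abs_pow_enn_def)
  then show "prob_space M \<Longrightarrow> abs_moment M Y 0 = 1"
    by (simp add: abs_moment_def prob_space.emeasure_space_1)
qed

lemma eventually_abs_moment_pos_finite:
  assumes "((\<lambda>t. log_moment_ratio M (Y t) q t) \<longlongrightarrow> ereal c) at_top"
  shows "\<forall>\<^sub>F t in at_top. \<exists>m>0. abs_moment M (Y t) q = ennreal m"
proof -
  have "\<forall>\<^sub>F t in at_top. log_moment_ratio M (Y t) q t \<noteq> \<infinity>"
    "\<forall>\<^sub>F t in at_top. log_moment_ratio M (Y t) q t \<noteq> -\<infinity>"
    using assms by (auto intro: tendsto_imp_eventually_ne)
  then show ?thesis
  proof eventually_elim
    case (elim t)
    then obtain m where "abs_moment M (Y t) q = ennreal m" "0 \<le> m" "m \<noteq> 0"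
      by (cases "abs_moment M (Y t) q") (auto simp: log_moment_ratio_def Let_def split: if_splits)
    then show ?case
      by (intro exI[of _ m]) auto
  qed
qed

lemma scaling_function_of_moment_limits:
  assumes "prob_space M" and measurable: "\<And>t. t \<ge> 0 \<Longrightarrow> X t \<in> borel_measurable M"
    and lim: "\<And>q. ((\<lambda>t. log_moment_ratio M (X t) q t) \<longlongrightarrow> \<tau> q) at_top"
    and not_MInfty: "\<And>q. \<tau> q \<noteq> -\<infinity>"
  shows "scaling_function \<tau>"
proof
  have "log_moment_ratio M (X t) 0 t = 0" for t
    using abs_moment_order_zero[OF \<open>prob_space M\<close>] by (simp add: log_moment_ratio_def)
  then show "\<tau> 0 = 0"
    using lim[of 0] by (simp add: tendsto_const_iff)
next
  fix x y l :: real
  assume l: "0 < l" "l < 1"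
  show "\<tau> ((1 - l) * x + l * y) \<le> ereal (1 - l) * \<tau> x + ereal l * \<tau> y"
  proof (cases "\<tau> x = \<infinity> \<or> \<tau> y = \<infinity>")
    case True
    with l not_MInfty[of x] not_MInfty[of y] show ?thesis
      by (cases "\<tau> x"; cases "\<tau> y") auto
  next
    case False
    then obtain a b where ab: "\<tau> x = ereal a" "\<tau> y = ereal b"
      using not_MInfty[of x] not_MInfty[of y] by (cases "\<tau> x"; cases "\<tau> y") auto
    have "\<forall>\<^sub>F t in at_top. log_moment_ratio M (X t) ((1 - l) * x + l * y) t
        \<le> ereal (1 - l) * log_moment_ratio M (X t) x t + ereal l * log_moment_ratio M (X t) y t"
      using eventually_abs_moment_pos_finite[OF lim[of x, unfolded ab]]
        eventually_abs_moment_pos_finite[OF lim[of y, unfolded ab]]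
        eventually_gt_at_top[of "1 :: real"]
    proof eventually_elim
      case (elim t)
      then show ?case
        using log_moment_ratio_convex_combination_le[OF measurable _ l] by auto
    qed
    moreover have "((\<lambda>t. ereal (1 - l) * log_moment_ratio M (X t) x t
        + ereal l * log_moment_ratio M (X t) y t) \<longlongrightarrow> ereal (1 - l) * \<tau> x + ereal l * \<tau> y) at_top"
      using ab by (intro tendsto_add_ereal tendsto_cmult_ereal lim) auto
    ultimately show ?thesis
      using lim by (intro tendsto_le[of at_top]) auto
  qed
qed (fact not_MInfty)

theorem proposition2p1:
  fixes M :: "'a measure" and X :: "real \<Rightarrow> 'a \<Rightarrow> real" and \<tau> :: "real \<Rightarrow> ereal"
  assumes "prob_space M"
    and "\<And>t. t \<ge> 0 \<Longrightarrow> X t \<in> borel_measurable M"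
    and lim: "\<And>q. ((\<lambda>t. log_moment_ratio M (X t) q t) \<longlongrightarrow> \<tau> q) at_top"
    and fin: "\<And>q. \<tau> q \<noteq> -\<infinity>"
  defines "D \<equiv> {q. \<tau> q < \<infinity>}"
  shows
    "(\<forall>x y l. 0 < l \<and> l < 1 \<longrightarrow>
        \<tau> ((1 - l) * x + l * y) \<le> ereal (1 - l) * \<tau> x + ereal l * \<tau> y)
   \<and> (\<forall>p q. p \<in> D - {0} \<and> q \<in> D - {0} \<and> p \<le> q \<longrightarrow>
        real_of_ereal (\<tau> p) / p \<le> real_of_ereal (\<tau> q) / q)
   \<and> (\<forall>q'>0. \<tau> q' \<ge> 0 \<longrightarrow>
        (\<forall>q\<ge>q'. \<tau> q \<ge> 0) \<and>
        (\<forall>p q. p \<in> D \<and> q \<in> D \<and> q' \<le> p \<and> p \<le> q \<longrightarrow> \<tau> p \<le> \<tau> q))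
   \<and> ((\<forall>q>0. \<tau> q \<ge> 0) \<longrightarrow>
        (\<forall>p q. p \<in> D \<and> q \<in> D \<and> 0 \<le> p \<and> p \<le> q \<longrightarrow> \<tau> p \<le> \<tau> q))
   \<and> (\<forall>q<0. \<tau> q \<ge> ereal q * (INF q'\<in>{0<..}. \<tau> q' / ereal q'))
   \<and> (\<forall>q<0. \<tau> q \<ge> - \<tau> (- q))"
proof -
  interpret scaling_function \<tau>
    using scaling_function_of_moment_limits assms by blast
  show ?thesis
    unfolding D_def
    using convex ratio_mono nonneg_above mono_above mono_nonneg ge_mult_INF_ratio uminus_at_uminus_le
    by auto
qed

end
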